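(* Let $G$ be a graph with $n$ nodes and graph Laplacian $\mathbf{L}$. Then a matrix $\mathbf{P}\in\mathbb{R}^{n\times d}$ is node- and adjacency-identifying if there exist matrices $\mathbf{W}^Q,\mathbf{W}^K\in\mathbb{R}^{d\times d}$ such that $$\frac{1}{\sqrt{d_k}}(\mathbf{P}\mathbf{W}^Q)(\mathbf{P}\mathbf{W}^K)^T=\mathbf{L}.$$
   Context: Graphs are finite, undirected, without self-loops and without isolated nodes; $\mathbf{L}=\mathbf{D}-\mathbf{A}(G)$ with $\mathbf{D}$ the degree matrix and $\mathbf{A}(G)$ the adjacency matrix; $d_k>0$ is a fixed constant. For $\mathbf{W}^Q,\mathbf{W}^K$ put $\tilde{\mathbf{P}}=\frac{1}{\sqrt{d_k}}\mathbf{P}\mathbf{W}^Q(\mathbf{P}\mathbf{W}^K)^T$. $\mathbf{P}$ is node-identifying if for some $\mathbf{W}^Q,\mathbf{W}^K$: $\tilde{\mathbf{P}}_{ij}=\max_k\tilde{\mathbf{P}}_{ik}\iff i=j$; adjacency-identifying if for some (possibly different) $\mathbf{W}^Q,\mathbf{W}^K$: $\tilde{\mathbf{P}}_{ij}=\max_k\tilde{\mathbf{P}}_{ik}\iff\mathbf{A}(G)_{ij}=1$. *)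

theory Defs
  imports "HOL-Analysis.Analysis"
begin

definition graph :: "('n::finite \<Rightarrow> 'n \<Rightarrow> bool) \<Rightarrow> bool" where
  "graph E \<longleftrightarrow> (\<forall>i j. E i j \<longrightarrow> E j i) \<and> (\<forall>i. \<not> E i i) \<and> (\<forall>i. \<exists>j. E i j)"

definition adj_matrix :: "('n::finite \<Rightarrow> 'n \<Rightarrow> bool) \<Rightarrow> real^'n^'n" where
  "adj_matrix E = (\<chi> i j. if E i j then 1 else 0)"

definition degree_matrix :: "('n::finite \<Rightarrow> 'n \<Rightarrow> bool) \<Rightarrow> real^'n^'n" where
  "degree_matrix E = (\<chi> i j. if i = j then real (card {k. E i k}) else 0)"

definition laplacian :: "('n::finite \<Rightarrow> 'n \<Rightarrow> bool) \<Rightarrow> real^'n^'n" where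
  "laplacian E = degree_matrix E - adj_matrix E"

definition ptilde :: "real \<Rightarrow> real^'d^'n \<Rightarrow> real^'d^'d \<Rightarrow> real^'d^'d \<Rightarrow> real^'n^'n" where
  "ptilde dk P WQ WK = (1 / sqrt dk) *\<^sub>R ((P ** WQ) ** transpose (P ** WK))"

definition node_identifying :: "real \<Rightarrow> real^'d^'n::finite \<Rightarrow> bool" where
  "node_identifying dk P \<longleftrightarrow> (\<exists>WQ WK::real^'d^'d. \<forall>i j.
     ptilde dk P WQ WK $ i $ j = Max (range (\<lambda>k. ptilde dk P WQ WK $ i $ k)) \<longleftrightarrow> i = j)"

definition adjacency_identifying ::
  "real \<Rightarrow> ('n::finite \<Rightarrow> 'n \<Rightarrow> bool) \<Rightarrow> real^'d^'n \<Rightarrow> bool" where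
  "adjacency_identifying dk E P \<longleftrightarrow> (\<exists>WQ WK::real^'d^'d. \<forall>i j.
     ptilde dk P WQ WK $ i $ j = Max (range (\<lambda>k. ptilde dk P WQ WK $ i $ k))
       \<longleftrightarrow> adj_matrix E $ i $ j = 1)"

end

theory Submission
  imports Defs
begin

text \<open>The diagonal entry of row \<open>i\<close> of \<open>L\<close> is the degree of \<open>i\<close>, which is positive as
  \<open>i\<close> is not isolated, while the off-diagonal entries are 0 or -1; so the row maximum sits
  exactly on the diagonal. Negating \<open>W\<^sup>Q\<close> turns \<open>L\<close> into \<open>-L\<close>, whose row \<open>i\<close> has entry 1
  at the neighbours of \<open>i\<close>, 0 at the other nodes and \<open>-deg i < 0\<close> on the diagonal; so the
  row maximum 1 sits exactly on the neighbours.\<close>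

lemma ptilde_uminus_left: "ptilde dk P (- WQ) WK = - ptilde dk P WQ WK"
  by (simp add: ptilde_def vec_eq_iff matrix_matrix_mult_def transpose_def sum_negf)

lemma laplacian_nth:
  "laplacian E $ i $ j =
     (if i = j then real (card {k. E i k}) else 0) - (if E i j then 1 else 0)"
  by (simp add: laplacian_def degree_matrix_def adj_matrix_def)

lemma graph_irrefl: "graph E \<Longrightarrow> \<not> E i i"
  by (simp add: graph_def)

lemma graph_obtain_neighbour:
  assumes "graph E"
  obtains j where "E i j"
  using assms unfolding graph_def by blast

lemma Max_range_eqI:
  fixes f :: "'a::finite \<Rightarrow> 'b::linorder"
  assumes "\<And>k. f k \<le> f a"
  shows "Max (range f) = f a"
  using assms by (intro Max_eqI) auto

lemma laplacian_row_max_iff_diag: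
  assumes "graph E"
  shows "laplacian E $ i $ j = Max (range (\<lambda>k. laplacian E $ i $ k)) \<longleftrightarrow> i = j"
proof -
  obtain a where "E i a"
    using assms by (rule graph_obtain_neighbour)
  have "\<not> E i i"
    using assms by (rule graph_irrefl)
  then have "Max (range (\<lambda>k. laplacian E $ i $ k)) = laplacian E $ i $ i"
    by (intro Max_range_eqI) (auto simp: laplacian_nth)
  with \<open>\<not> E i i\<close> \<open>E i a\<close> show ?thesis
    by (auto simp: laplacian_nth)
qed

lemma neg_laplacian_row_max_iff_adj:
  assumes "graph E"
  shows "(- laplacian E) $ i $ j = Max (range (\<lambda>k. (- laplacian E) $ i $ k))
           \<longleftrightarrow> adj_matrix E $ i $ j = 1"
proof -
  obtain a where "E i a"
    using assms by (rule graph_obtain_neighbour)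
  have "\<not> E i i"
    using assms by (rule graph_irrefl)
  with \<open>E i a\<close> have "Max (range (\<lambda>k. (- laplacian E) $ i $ k)) = (- laplacian E) $ i $ a"
    by (intro Max_range_eqI) (auto simp: laplacian_nth)
  with \<open>\<not> E i i\<close> \<open>E i a\<close> show ?thesis
    by (auto simp: laplacian_nth adj_matrix_def)
qed

theorem lemmaF6:
  fixes E :: "'n::finite \<Rightarrow> 'n \<Rightarrow> bool"
    and P :: "real^'d^'n"
    and dk :: real
  assumes "graph E"
    and "dk > 0"
    and "\<exists>WQ WK::real^'d^'d. ptilde dk P WQ WK = laplacian E"
  shows "node_identifying dk P \<and> adjacency_identifying dk E P"
proof
  obtain WQ WK :: "real^'d^'d" where L: "ptilde dk P WQ WK = laplacian E"
    using assms(3) by blast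
  show "node_identifying dk P"
    unfolding node_identifying_def
    by (intro exI [of _ WQ] exI [of _ WK])
      (simp add: L laplacian_row_max_iff_diag [OF assms(1)])
  have "ptilde dk P (- WQ) WK = - laplacian E"
    by (simp add: ptilde_uminus_left L)
  then show "adjacency_identifying dk E P"
    unfolding adjacency_identifying_def
    by (intro exI [of _ "- WQ"] exI [of _ WK])
      (simp add: neg_laplacian_row_max_iff_adj [OF assms(1)] del: vector_uminus_component)
qed

end
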